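(* Let $G$ be a group and $A\subseteq G$ a nonempty finite set. Suppose $H$ is a finite subgroup of $G$ such that $H\subseteq\operatorname{Stab}^r_N(A)$ for some $N>0$. Then there is a set $D\subseteq G$ which is a union of left cosets of $H$ such that $|A\triangle D|\leq N$.
   Context: $\operatorname{Stab}^r_N(A)=\{x\in G:|Ax\triangle A|\leq N\}$, where $\triangle$ denotes symmetric difference. *)

theory Defs
  imports "HOL-Algebra.Coset"
begin

definition sym_diff :: "'a set \<Rightarrow> 'a set \<Rightarrow> 'a set" where
  "sym_diff X Y = (X - Y) \<union> (Y - X)"

definition stab_r :: "('a, 'b) monoid_scheme \<Rightarrow> nat \<Rightarrow> 'a set \<Rightarrow> 'a set" where
  "stab_r G N A = {x \<in> carrier G. card (sym_diff (A #>\<^bsub>G\<^esub> x) A) \<le> N}"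

end

theory Submission
  imports Defs "HOL-Algebra.Left_Coset"
begin

text \<open>Let \<open>k = |H|\<close> and let \<open>D\<close> be the set of those \<open>x\<close> whose left coset \<open>xH\<close> has more than
  \<open>k/2\<close> points in \<open>A\<close>; it is a union of left cosets. Counting the pairs \<open>(a, h) \<in> A \<times> H\<close> with
  \<open>ah \<notin> A\<close> in two ways gives \<open>\<Sum>\<^bsub>h\<in>H\<^esub> |Ah \<triangle> A| = 2 \<Sum>\<^bsub>a\<in>A\<^esub> |aH - A|\<close>. A point \<open>a \<in> A - D\<close>
  lies in a coset at most half inside \<open>A\<close>, so contributes at least \<open>k/2\<close>. The terms for
  \<open>a \<in> A \<inter> D\<close> count pairs \<open>(a, y)\<close> in a common coset with \<open>y \<in> D - A\<close>; grouped by \<open>y\<close>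
  instead, they contribute more than \<open>k/2\<close> for each \<open>y \<in> D - A\<close>. Hence
  \<open>k |A \<triangle> D| \<le> \<Sum>\<^bsub>h\<in>H\<^esub> |Ah \<triangle> A| \<le> k N\<close>.\<close>

definition coset_majority :: "('a, 'b) monoid_scheme \<Rightarrow> 'a set \<Rightarrow> 'a set \<Rightarrow> 'a set" where
  "coset_majority G H A = {x \<in> carrier G. card H < 2 * card ((x <#\<^bsub>G\<^esub> H) \<inter> A)}"

lemma card_sym_diff:
  assumes "finite X" "finite Y"
  shows "card (sym_diff X Y) = card (X - Y) + card (Y - X)"
  unfolding sym_diff_def using assms by (intro card_Un_disjoint) auto

lemma sum_card_filter_swap:
  assumes "finite X" "finite Y"
  shows "(\<Sum>x\<in>X. card {y \<in> Y. P x y}) = (\<Sum>y\<in>Y. card {x \<in> X. P x y})"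
proof -
  have "(\<Sum>x\<in>X. card {y \<in> Y. P x y}) = (\<Sum>x\<in>X. \<Sum>y\<in>Y. if P x y then 1 else 0)"
    using assms(2) by (simp add: sum.inter_filter[symmetric])
  also have "\<dots> = (\<Sum>y\<in>Y. \<Sum>x\<in>X. if P x y then 1 else 0)"
    by (rule sum.swap)
  also have "\<dots> = (\<Sum>y\<in>Y. card {x \<in> X. P x y})"
    using assms(1) by (simp add: sum.inter_filter[symmetric])
  finally show ?thesis .
qed

context group
begin

lemma card_l_coset:
  assumes "H \<subseteq> carrier G" "x \<in> carrier G"
  shows "card (x <# H) = card H"
proof -
  have "x <# H = (\<lambda>h. x \<otimes> h) ` H"
    by (auto simp: l_coset_def)
  then show ?thesis
    using assms by (simp add: card_image inj_on_g')
qed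

lemma card_sym_diff_r_coset:
  assumes "A \<subseteq> carrier G" "finite A" "h \<in> carrier G"
  shows "card (sym_diff (A #> h) A) = 2 * card {z \<in> A. z \<otimes> h \<notin> A}"
proof -
  have Ah: "A #> h = (\<lambda>z. z \<otimes> h) ` A"
    by (auto simp: r_coset_def)
  have inj: "inj_on (\<lambda>z. z \<otimes> h) A"
    using assms by (simp add: inj_on_g)
  have "card (A #> h) = card A"
    using inj by (simp add: Ah card_image)
  then have "card (A - (A #> h)) = card ((A #> h) - A)"
    using assms(2) by (simp add: Ah card_Diff_subset_Int Int_commute)
  moreover have "(A #> h) - A = (\<lambda>z. z \<otimes> h) ` {z \<in> A. z \<otimes> h \<notin> A}"
    by (auto simp: Ah)
  moreover have "card ((\<lambda>z. z \<otimes> h) ` {z \<in> A. z \<otimes> h \<notin> A}) = card {z \<in> A. z \<otimes> h \<notin> A}"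
    using inj by (intro card_image) (auto intro: inj_on_subset)
  ultimately show ?thesis
    using assms(2) by (simp add: card_sym_diff Ah)
qed

lemma sum_card_sym_diff_r_coset:
  assumes "A \<subseteq> carrier G" "finite A" "H \<subseteq> carrier G" "finite H"
  shows "(\<Sum>h\<in>H. card (sym_diff (A #> h) A)) = 2 * (\<Sum>z\<in>A. card ((z <# H) - A))"
proof -
  have "(\<Sum>h\<in>H. card (sym_diff (A #> h) A)) = (\<Sum>h\<in>H. 2 * card {z \<in> A. z \<otimes> h \<notin> A})"
    using assms by (intro sum.cong refl card_sym_diff_r_coset) auto
  also have "\<dots> = 2 * (\<Sum>h\<in>H. card {z \<in> A. z \<otimes> h \<notin> A})"
    by (simp add: sum_distrib_left)
  also have "\<dots> = 2 * (\<Sum>z\<in>A. card {h \<in> H. z \<otimes> h \<notin> A})"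
    using assms by (simp only: sum_card_filter_swap[of H A])
  also have "\<dots> = 2 * (\<Sum>z\<in>A. card ((z <# H) - A))"
  proof -
    have "card {h \<in> H. z \<otimes> h \<notin> A} = card ((z <# H) - A)" if "z \<in> A" for z
    proof -
      have "(z <# H) - A = (\<lambda>h. z \<otimes> h) ` {h \<in> H. z \<otimes> h \<notin> A}"
        by (auto simp: l_coset_def)
      moreover have "inj_on (\<lambda>h. z \<otimes> h) {h \<in> H. z \<otimes> h \<notin> A}"
        using assms(1) that by (intro inj_on_subset[OF inj_on_g'[OF assms(3)]]) auto
      ultimately show ?thesis
        by (simp add: card_image)
    qed
    then show ?thesis
      by (simp cong: sum.cong)
  qed
  finally show ?thesis .
qed

lemma sum_card_l_coset_Int_swap:
  assumes "subgroup H G" "X \<subseteq> carrier G" "Y \<subseteq> carrier G" "finite X" "finite Y"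
  shows "(\<Sum>x\<in>X. card ((x <# H) \<inter> Y)) = (\<Sum>y\<in>Y. card ((y <# H) \<inter> X))"
proof -
  have "(\<Sum>x\<in>X. card ((x <# H) \<inter> Y)) = (\<Sum>x\<in>X. card {y \<in> Y. y \<in> x <# H})"
    by (simp add: Int_def conj_commute)
  also have "\<dots> = (\<Sum>y\<in>Y. card {x \<in> X. y \<in> x <# H})"
    using assms by (intro sum_card_filter_swap)
  also have "\<dots> = (\<Sum>y\<in>Y. card {x \<in> X. x \<in> y <# H})"
    using assms by (intro sum.cong refl arg_cong[where f = card]) (blast intro: l_coset_swap)
  also have "\<dots> = (\<Sum>y\<in>Y. card ((y <# H) \<inter> X))"
    by (simp add: Int_def conj_commute)
  finally show ?thesis .
qed

lemma sum_card_l_coset_Diff_swap: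
  assumes "subgroup H G" "A \<subseteq> carrier G" "finite A" "D \<subseteq> carrier G" "finite D"
    and "\<And>x. x \<in> D \<Longrightarrow> x <# H \<subseteq> D"
  shows "(\<Sum>z\<in>A \<inter> D. card ((z <# H) - A)) = (\<Sum>y\<in>D - A. card ((y <# H) \<inter> A))"
proof -
  have "(\<Sum>z\<in>A \<inter> D. card ((z <# H) - A)) = (\<Sum>z\<in>A \<inter> D. card ((z <# H) \<inter> (D - A)))"
    using assms(6) by (intro sum.cong refl arg_cong[where f = card]) blast
  also have "\<dots> = (\<Sum>y\<in>D - A. card ((y <# H) \<inter> (A \<inter> D)))"
    using assms(1-5) by (intro sum_card_l_coset_Int_swap) auto
  also have "\<dots> = (\<Sum>y\<in>D - A. card ((y <# H) \<inter> A))"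
    using assms(6) by (intro sum.cong refl arg_cong[where f = card]) blast
  finally show ?thesis .
qed

lemma l_coset_subset_coset_majority:
  assumes "subgroup H G" "x \<in> coset_majority G H A"
  shows "x <# H \<subseteq> coset_majority G H A"
proof
  fix y
  assume y: "y \<in> x <# H"
  have x: "x \<in> carrier G"
    using assms(2) by (simp add: coset_majority_def)
  have "x <# H = y <# H"
    using y x assms(1) by (rule l_repr_independence)
  moreover have "y \<in> carrier G"
    using y x assms(1) by (rule l_coset_carrier)
  ultimately show "y \<in> coset_majority G H A"
    using assms(2) by (simp add: coset_majority_def)
qed

lemma coset_majority_eq_Union:
  assumes "subgroup H G"
  shows "coset_majority G H A = (\<Union>x\<in>coset_majority G H A. x <# H)"
proof
  show "coset_majority G H A \<subseteq> (\<Union>x\<in>coset_majority G H A. x <# H)"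
  proof
    fix x
    assume x: "x \<in> coset_majority G H A"
    then have "x \<in> x <# H"
      using assms by (simp add: coset_majority_def lcos_self)
    with x show "x \<in> (\<Union>x\<in>coset_majority G H A. x <# H)"
      by blast
  qed
  show "(\<Union>x\<in>coset_majority G H A. x <# H) \<subseteq> coset_majority G H A"
    using l_coset_subset_coset_majority[OF assms] by blast
qed

lemma finite_coset_majority:
  assumes "subgroup H G" "finite H" "finite A"
  shows "finite (coset_majority G H A)"
proof (rule finite_subset)
  show "coset_majority G H A \<subseteq> (\<Union>a\<in>A. a <# H)"
  proof
    fix x
    assume x: "x \<in> coset_majority G H A"
    then have "(x <# H) \<inter> A \<noteq> {}" and x_carrier: "x \<in> carrier G"
      by (auto simp: coset_majority_def)
    then obtain a where a: "a \<in> x <# H" "a \<in> A"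
      by blast
    have "x \<in> x <# H"
      using x_carrier assms(1) by (rule lcos_self)
    also have "x <# H = a <# H"
      using a(1) x_carrier assms(1) by (rule l_repr_independence)
    finally show "x \<in> (\<Union>a\<in>A. a <# H)"
      using a(2) by blast
  qed
  show "finite (\<Union>a\<in>A. a <# H)"
    using assms by (simp add: l_coset_def)
qed

lemma card_sym_diff_coset_majority_le:
  assumes "subgroup H G" "finite H" "A \<subseteq> carrier G" "finite A"
  defines "D \<equiv> coset_majority G H A"
  shows "card H * card (sym_diff A D) \<le> (\<Sum>h\<in>H. card (sym_diff (A #> h) A))"
proof -
  have H: "H \<subseteq> carrier G"
    using assms(1) by (rule subgroup.subset)
  have D_carrier: "D \<subseteq> carrier G"
    by (auto simp: D_def coset_majority_def)
  have D_finite: "finite D"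
    unfolding D_def using assms(1,2,4) by (rule finite_coset_majority)
  have coset_in_D: "\<And>x. x \<in> D \<Longrightarrow> x <# H \<subseteq> D"
    using assms(1) unfolding D_def by (rule l_coset_subset_coset_majority)
  have outside: "card H \<le> 2 * card ((z <# H) - A)" if "z \<in> A - D" for z
  proof -
    have z: "z \<in> carrier G"
      using that assms(3) by blast
    have "card H = card ((z <# H) \<inter> A) + card ((z <# H) - A)"
      using card_l_coset[OF H z] card_Int_Diff[of "z <# H" A] assms(2)
      by (simp add: l_coset_def)
    moreover have "2 * card ((z <# H) \<inter> A) \<le> card H"
      using that z by (simp add: D_def coset_majority_def)
    ultimately show ?thesis
      by linarith
  qed
  have inside: "card H \<le> 2 * card ((y <# H) \<inter> A)" if "y \<in> D - A" for y
    using that by (simp add: D_def coset_majority_def)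
  have A_Int_D: "(\<Sum>z\<in>A \<inter> D. card ((z <# H) - A)) = (\<Sum>y\<in>D - A. card ((y <# H) \<inter> A))"
    using assms(1,3,4) D_carrier D_finite coset_in_D by (rule sum_card_l_coset_Diff_swap)
  have "card (A - D) * card H \<le> (\<Sum>z\<in>A - D. 2 * card ((z <# H) - A))"
    using sum_bounded_below[of "A - D" "card H" "\<lambda>z. 2 * card ((z <# H) - A)"] outside by simp
  moreover have "card (D - A) * card H \<le> (\<Sum>y\<in>D - A. 2 * card ((y <# H) \<inter> A))"
    using sum_bounded_below[of "D - A" "card H" "\<lambda>y. 2 * card ((y <# H) \<inter> A)"] inside by simp
  moreover have "card H * card (sym_diff A D) = card (A - D) * card H + card (D - A) * card H"
    using assms(4) D_finite by (simp add: card_sym_diff algebra_simps)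
  ultimately have "card H * card (sym_diff A D)
      \<le> 2 * (\<Sum>z\<in>A - D. card ((z <# H) - A)) + 2 * (\<Sum>y\<in>D - A. card ((y <# H) \<inter> A))"
    by (simp add: sum_distrib_left)
  also have "\<dots> = 2 * (\<Sum>z\<in>A. card ((z <# H) - A))"
    using sum.Int_Diff[OF assms(4), of "\<lambda>z. card ((z <# H) - A)" D] by (simp add: A_Int_D)
  also have "\<dots> = (\<Sum>h\<in>H. card (sym_diff (A #> h) A))"
    using assms(2,3,4) H by (simp add: sum_card_sym_diff_r_coset)
  finally show ?thesis .
qed

end

theorem lemma6p2:
  fixes G :: "('a, 'b) monoid_scheme" and A H :: "'a set" and N :: nat
  assumes "group G"
    and "A \<subseteq> carrier G" and "finite A" and "A \<noteq> {}"
    and "subgroup H G" and "finite H"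
    and "N > 0"
    and "H \<subseteq> stab_r G N A"
  shows "\<exists>D S. S \<subseteq> carrier G \<and> D = (\<Union>x\<in>S. x <#\<^bsub>G\<^esub> H)
              \<and> finite (sym_diff A D) \<and> card (sym_diff A D) \<le> N"
proof -
  interpret group G by fact
  let ?D = "coset_majority G H A"
  have "card H * card (sym_diff A ?D) \<le> (\<Sum>h\<in>H. card (sym_diff (A #>\<^bsub>G\<^esub> h) A))"
    using assms by (intro card_sym_diff_coset_majority_le)
  also have "\<dots> \<le> card H * N"
    using assms(8) sum_bounded_above[of H "\<lambda>h. card (sym_diff (A #>\<^bsub>G\<^esub> h) A)" N]
    by (auto simp: stab_r_def)
  finally have "card (sym_diff A ?D) \<le> N"
    using assms(5,6) subgroup.one_closed card_gt_0_iff by fastforce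
  moreover have "finite (sym_diff A ?D)"
    using assms finite_coset_majority by (simp add: sym_diff_def)
  ultimately show ?thesis
    using assms(5) coset_majority_eq_Union
    by (intro exI[of _ ?D] exI[of _ ?D]) (auto simp: coset_majority_def)
qed

end
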